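(* Let $X_0,X_1,\ldots$ be i.i.d. real random variables with $\mathbb{E} X_0^2<\infty$ and $\mathbb{E} X_0=m$, and let $T_n$ be the associated random Toeplitz matrices. Then $$\lim_{n\to\infty}\frac{\|T_n\|}{n}=|m|\quad\text{almost surely.}$$
   Context: For a sequence of real random variables $X_0,X_1,\ldots$, the random symmetric Toeplitz matrix is $T_n=[X_{|i-j|}]_{1\le i,j\le n}$ and $\|T_n\|$ denotes its operator norm on $\ell_2^n$. *)

theory Defs
  imports "HOL-Probability.Probability"
begin

text \<open>Operator norm on the Euclidean space l2^n of the n x n real matrix with entries
  A i j, 0 \<le> i, j < n (indices shifted by one relative to the paper's 1..n).\<close>
definition mat_opnorm :: "nat \<Rightarrow> (nat \<Rightarrow> nat \<Rightarrow> real) \<Rightarrow> real" where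
  "mat_opnorm n A =
     Sup {sqrt (\<Sum>i<n. (\<Sum>j<n. A i j * x j)\<^sup>2) | x :: nat \<Rightarrow> real. (\<Sum>j<n. (x j)\<^sup>2) \<le> 1}"

definition toeplitz :: "(nat \<Rightarrow> real) \<Rightarrow> nat \<Rightarrow> nat \<Rightarrow> real" where
  "toeplitz a i j = a (nat \<bar>int i - int j\<bar>)"

end

theory Submission
  imports Defs "HOL-Library.Discrete_Functions"
begin

(* Fix a truncation level K, let u be truncation at K and mu = E u(X_0).  Then
   X_k = mu + W_k + R_k with W_k = u(X_k) - mu bounded and centred and
   R_k = X_k - u(X_k).  By the triangle inequality and the Schur test,
      | ||T_n(X)|| - |m| n |  <=  ||T_n(W)|| + 2 sum_{k<n} |R_k| + |mu - m| n.
   (1) Bounded centred part: ||T_n(W)||^4 <= ||T_n(W)^T T_n(W)||_F^2, whose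
       expectation is O(n^3) by counting matched lag quadruples; Markov and
       Borel-Cantelli along the squares n = (j+1)^2, plus monotonicity of
       ||T_n|| in n, give ||T_n(W)|| = o(n) almost surely.
   (2) Truncation error: a second-moment bound, again along squares, gives
       sum_{k<n} |R_k| <= (E |R_0| + o(1)) n almost surely, and
       E |R_0| <= E X_0^2 / K; also |mu - m| <= E |R_0|.
   Choosing K large in terms of eps gives | ||T_n|| - |m| n | <= eps n eventually,
   almost surely; intersecting over eps = 1/(k+1) proves the theorem. *)

section \<open>The operator norm\<close>

definition matvec_norm :: "nat \<Rightarrow> (nat \<Rightarrow> nat \<Rightarrow> real) \<Rightarrow> (nat \<Rightarrow> real) \<Rightarrow> real" where
  "matvec_norm n A x = sqrt (\<Sum>i<n. (\<Sum>j<n. A i j * x j)\<^sup>2)"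

definition unit_ball :: "nat \<Rightarrow> (nat \<Rightarrow> real) set" where
  "unit_ball n = {x. (\<Sum>j<n. (x j)\<^sup>2) \<le> 1}"

text \<open>Squared Frobenius norm of the Gram matrix A^T A; its fourth root bounds the
  operator norm, and it is a polynomial in the entries, hence has computable moments.\<close>

definition gram_frob :: "nat \<Rightarrow> (nat \<Rightarrow> nat \<Rightarrow> real) \<Rightarrow> real" where
  "gram_frob n A = (\<Sum>j<n. \<Sum>l<n. (\<Sum>i<n. A i j * A i l)\<^sup>2)"

lemma matvec_norm_nonneg: "0 \<le> matvec_norm n A x"
  unfolding matvec_norm_def by (simp add: sum_nonneg)

lemma gram_frob_nonneg: "0 \<le> gram_frob n A"
  unfolding gram_frob_def by (intro sum_nonneg) auto

text \<open>||Ax||^2 = <x, A^T A x> \<le> ||x|| ||A^T A x||, so by Cauchy-Schwarz over index pairs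
  ||Ax||^4 is bounded by the Frobenius norm squared of A^T A on the unit ball.\<close>

lemma matvec_norm_pow4_le_gram_frob:
  assumes "x \<in> unit_ball n"
  shows "(matvec_norm n A x)^4 \<le> gram_frob n A"
proof -
  let ?I = "{..<n} \<times> {..<n}"
  have sq: "(matvec_norm n A x)\<^sup>2 = (\<Sum>p\<in>?I. (x (fst p) * x (snd p)) * (\<Sum>i<n. A i (fst p) * A i (snd p)))"
  proof -
    have "(matvec_norm n A x)\<^sup>2 = (\<Sum>i<n. (\<Sum>j<n. A i j * x j)\<^sup>2)"
      unfolding matvec_norm_def by (simp add: sum_nonneg)
    also have "\<dots> = (\<Sum>i<n. \<Sum>j<n. \<Sum>l<n. (A i j * x j) * (A i l * x l))"
      by (simp add: power2_eq_square sum_product)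
    also have "\<dots> = (\<Sum>j<n. \<Sum>l<n. \<Sum>i<n. (A i j * x j) * (A i l * x l))"
      by (subst sum.swap, subst (2) sum.swap, simp)
    also have "\<dots> = (\<Sum>j<n. \<Sum>l<n. (x j * x l) * (\<Sum>i<n. A i j * A i l))"
      by (simp add: sum_distrib_left algebra_simps)
    finally show ?thesis by (simp add: sum.cartesian_product split_def)
  qed
  have cauchy_schwarz: "((matvec_norm n A x)\<^sup>2)\<^sup>2 \<le>
      (\<Sum>p\<in>?I. (x (fst p) * x (snd p))\<^sup>2) * (\<Sum>p\<in>?I. (\<Sum>i<n. A i (fst p) * A i (snd p))\<^sup>2)"
    unfolding sq by (rule Cauchy_Schwarz_ineq_sum)
  have x_part: "(\<Sum>p\<in>?I. (x (fst p) * x (snd p))\<^sup>2) = (\<Sum>j<n. (x j)\<^sup>2)\<^sup>2"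
    by (simp add: sum.cartesian_product split_def power_mult_distrib
        power2_eq_square[of "sum _ _"] sum_product)
  have A_part: "(\<Sum>p\<in>?I. (\<Sum>i<n. A i (fst p) * A i (snd p))\<^sup>2) = gram_frob n A"
    unfolding gram_frob_def by (simp add: sum.cartesian_product split_def)
  have x0: "0 \<le> (\<Sum>j<n. (x j)\<^sup>2)" by (intro sum_nonneg) auto
  with assms have "(\<Sum>j<n. (x j)\<^sup>2)\<^sup>2 \<le> 1" by (simp add: unit_ball_def power_le_one)
  then have "(\<Sum>j<n. (x j)\<^sup>2)\<^sup>2 * gram_frob n A \<le> gram_frob n A"
    using gram_frob_nonneg[of n A] by (simp add: mult_left_le_one_le)
  then show ?thesis using cauchy_schwarz x_part A_part by simp
qed

lemma mat_opnorm_eq_Sup: "mat_opnorm n A = Sup (matvec_norm n A ` unit_ball n)"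
  unfolding mat_opnorm_def matvec_norm_def unit_ball_def
  by (rule arg_cong[where f=Sup]) auto

lemma zero_in_unit_ball: "(\<lambda>_. 0) \<in> unit_ball n"
  by (simp add: unit_ball_def)

lemma matvec_norm_le_root_gram: "x \<in> unit_ball n \<Longrightarrow> matvec_norm n A x \<le> root 4 (gram_frob n A)"
  using matvec_norm_pow4_le_gram_frob[of x n A] matvec_norm_nonneg[of n A x]
  by (metis real_root_le_iff real_root_pos2 zero_less_numeral)

lemma matvec_norm_le_mat_opnorm: "x \<in> unit_ball n \<Longrightarrow> matvec_norm n A x \<le> mat_opnorm n A"
  unfolding mat_opnorm_eq_Sup
  by (rule cSup_upper) (auto intro!: bdd_aboveI2 matvec_norm_le_root_gram)

lemma mat_opnorm_le: "(\<And>x. x \<in> unit_ball n \<Longrightarrow> matvec_norm n A x \<le> c) \<Longrightarrow> mat_opnorm n A \<le> c"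
  unfolding mat_opnorm_eq_Sup by (rule cSup_least) (use zero_in_unit_ball in auto)

lemma mat_opnorm_nonneg: "0 \<le> mat_opnorm n A"
  using matvec_norm_le_mat_opnorm[OF zero_in_unit_ball] matvec_norm_nonneg order_trans by blast

lemma mat_opnorm_le_gram_frob:
  assumes "gram_frob n A \<le> t^4" "0 \<le> t"
  shows "mat_opnorm n A \<le> t"
proof (rule mat_opnorm_le)
  fix x assume "x \<in> unit_ball n"
  then have "(matvec_norm n A x)^4 \<le> t^4"
    using matvec_norm_pow4_le_gram_frob assms(1) order_trans by blast
  then show "matvec_norm n A x \<le> t"
    using assms(2) matvec_norm_nonneg power_mono_iff[of "matvec_norm n A x" t 4] by simp
qed

text \<open>The leading n x n block is a compression of the leading n' x n' block.\<close>

lemma mat_opnorm_mono: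
  assumes "n \<le> n'"
  shows "mat_opnorm n A \<le> mat_opnorm n' A"
proof (rule mat_opnorm_le)
  fix x assume x: "x \<in> unit_ball n"
  define x' where "x' j = (if j < n then x j else 0)" for j
  have pad: "(\<Sum>j<n'. f j * x' j) = (\<Sum>j<n. f j * x j)" for f :: "nat \<Rightarrow> real"
  proof -
    have "(\<Sum>j<n'. f j * x' j) = (\<Sum>j<n. f j * x' j)"
      using assms by (intro sum.mono_neutral_right) (auto simp: x'_def)
    then show ?thesis by (simp add: x'_def)
  qed
  have "x' \<in> unit_ball n'"
    using x pad[of x'] pad[of x] by (simp add: unit_ball_def power2_eq_square x'_def)
  moreover have "matvec_norm n A x \<le> matvec_norm n' A x'"
    unfolding matvec_norm_def pad using assms by (intro real_sqrt_le_mono sum_mono2) auto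
  ultimately show "matvec_norm n A x \<le> mat_opnorm n' A"
    using matvec_norm_le_mat_opnorm order_trans by blast
qed

lemma mat_opnorm_add: "mat_opnorm n (\<lambda>i j. A i j + B i j) \<le> mat_opnorm n A + mat_opnorm n B"
proof (rule mat_opnorm_le)
  fix x assume x: "x \<in> unit_ball n"
  have "matvec_norm n (\<lambda>i j. A i j + B i j) x \<le> matvec_norm n A x + matvec_norm n B x"
    using L2_set_triangle_ineq[of "\<lambda>i. (\<Sum>j<n. A i j * x j)" "\<lambda>i. (\<Sum>j<n. B i j * x j)" "{..<n}"]
    unfolding matvec_norm_def L2_set_def by (simp add: distrib_right sum.distrib)
  then show "matvec_norm n (\<lambda>i j. A i j + B i j) x \<le> mat_opnorm n A + mat_opnorm n B"
    using matvec_norm_le_mat_opnorm[OF x, of A] matvec_norm_le_mat_opnorm[OF x, of B] by linarith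
qed

lemma mat_opnorm_uminus: "mat_opnorm n (\<lambda>i j. - A i j) = mat_opnorm n A"
proof -
  have "matvec_norm n (\<lambda>i j. - A i j) = matvec_norm n A"
    by (rule ext) (simp add: matvec_norm_def sum_negf)
  then show ?thesis by (simp add: mat_opnorm_eq_Sup)
qed

text \<open>The all-c matrix is c n times the projection onto the unit vector (1,...,1)/sqrt n.\<close>

lemma mat_opnorm_const: "mat_opnorm n (\<lambda>i j. c) = \<bar>c\<bar> * real n"
proof (rule antisym)
  show "mat_opnorm n (\<lambda>i j. c) \<le> \<bar>c\<bar> * real n"
  proof (rule mat_opnorm_le)
    fix x assume x: "x \<in> unit_ball n"
    have "(\<Sum>j<n. 1 * x j)\<^sup>2 \<le> (\<Sum>j<n. 1\<^sup>2) * (\<Sum>j<n. (x j)\<^sup>2)"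
      by (rule Cauchy_Schwarz_ineq_sum)
    then have "(\<Sum>j<n. x j)\<^sup>2 \<le> real n" using x unfolding unit_ball_def
      by simp (meson mult_left_le order_trans of_nat_0_le_iff)
    then have "real n * (c\<^sup>2 * (\<Sum>j<n. x j)\<^sup>2) \<le> real n * (c\<^sup>2 * real n)"
      by (intro mult_left_mono) auto
    then have "(\<Sum>i<n. (\<Sum>j<n. c * x j)\<^sup>2) \<le> (\<bar>c\<bar> * real n)\<^sup>2"
      by (simp add: sum_distrib_left[symmetric] power2_eq_square[of "real n"] algebra_simps)
    then show "matvec_norm n (\<lambda>i j. c) x \<le> \<bar>c\<bar> * real n"
      unfolding matvec_norm_def using real_sqrt_le_mono by fastforce
  qed
next
  show "\<bar>c\<bar> * real n \<le> mat_opnorm n (\<lambda>i j. c)"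
  proof (cases "n = 0")
    case True then show ?thesis using mat_opnorm_nonneg by simp
  next
    case False
    define x where "x j = 1 / sqrt (real n)" for j :: nat
    have x: "x \<in> unit_ball n" using False by (simp add: unit_ball_def x_def power_divide)
    have "(\<Sum>j<n. c * x j) = c * (real n / sqrt (real n))"
      by (simp add: x_def)
    also have "\<dots> = c * sqrt (real n)" by (simp add: real_div_sqrt)
    finally have "(\<Sum>j<n. c * x j) = c * sqrt (real n)" .
    then have "matvec_norm n (\<lambda>i j. c) x = \<bar>c\<bar> * real n"
      unfolding matvec_norm_def by (simp add: power_mult_distrib real_sqrt_mult)
    then show ?thesis using matvec_norm_le_mat_opnorm[OF x, of "\<lambda>i j. c"] by simp
  qed
qed

lemma weighted_Cauchy_Schwarz:
  fixes a x :: "nat \<Rightarrow> real"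
  shows "(\<Sum>j<n. a j * x j)\<^sup>2 \<le> (\<Sum>j<n. \<bar>a j\<bar>) * (\<Sum>j<n. \<bar>a j\<bar> * (x j)\<^sup>2)"
proof -
  have "\<bar>\<Sum>j<n. a j * x j\<bar> \<le> (\<Sum>j<n. sqrt \<bar>a j\<bar> * (sqrt \<bar>a j\<bar> * \<bar>x j\<bar>))"
    by (rule order_trans[OF sum_abs]) (simp add: abs_mult flip: mult.assoc)
  then have "(\<Sum>j<n. a j * x j)\<^sup>2 \<le> (\<Sum>j<n. sqrt \<bar>a j\<bar> * (sqrt \<bar>a j\<bar> * \<bar>x j\<bar>))\<^sup>2"
    by (metis abs_ge_zero power2_abs power_mono)
  also have "\<dots> \<le> (\<Sum>j<n. (sqrt \<bar>a j\<bar>)\<^sup>2) * (\<Sum>j<n. (sqrt \<bar>a j\<bar> * \<bar>x j\<bar>)\<^sup>2)"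
    by (rule Cauchy_Schwarz_ineq_sum)
  also have "\<dots> = (\<Sum>j<n. \<bar>a j\<bar>) * (\<Sum>j<n. \<bar>a j\<bar> * (x j)\<^sup>2)"
    by (simp add: power_mult_distrib)
  finally show ?thesis .
qed

lemma mat_opnorm_Schur_test:
  assumes R: "0 \<le> R" and rows: "\<And>i. i < n \<Longrightarrow> (\<Sum>j<n. \<bar>A i j\<bar>) \<le> R"
    and cols: "\<And>j. j < n \<Longrightarrow> (\<Sum>i<n. \<bar>A i j\<bar>) \<le> R"
  shows "mat_opnorm n A \<le> R"
proof (rule mat_opnorm_le)
  fix x assume x: "x \<in> unit_ball n"
  have "(\<Sum>i<n. (\<Sum>j<n. A i j * x j)\<^sup>2) \<le> (\<Sum>i<n. R * (\<Sum>j<n. \<bar>A i j\<bar> * (x j)\<^sup>2))"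
  proof (rule sum_mono)
    fix i assume i: "i \<in> {..<n}"
    have "(\<Sum>j<n. A i j * x j)\<^sup>2 \<le> (\<Sum>j<n. \<bar>A i j\<bar>) * (\<Sum>j<n. \<bar>A i j\<bar> * (x j)\<^sup>2)"
      by (rule weighted_Cauchy_Schwarz)
    also have "\<dots> \<le> R * (\<Sum>j<n. \<bar>A i j\<bar> * (x j)\<^sup>2)"
      using rows i by (intro mult_right_mono sum_nonneg) auto
    finally show "(\<Sum>j<n. A i j * x j)\<^sup>2 \<le> R * (\<Sum>j<n. \<bar>A i j\<bar> * (x j)\<^sup>2)" .
  qed
  also have "\<dots> = R * (\<Sum>j<n. (x j)\<^sup>2 * (\<Sum>i<n. \<bar>A i j\<bar>))"
  proof -
    have "(\<Sum>i<n. \<Sum>j<n. \<bar>A i j\<bar> * (x j)\<^sup>2) = (\<Sum>j<n. (x j)\<^sup>2 * (\<Sum>i<n. \<bar>A i j\<bar>))"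
      by (subst sum.swap) (simp add: sum_distrib_left mult_ac)
    then show ?thesis by (simp add: sum_distrib_left[symmetric])
  qed
  also have "\<dots> \<le> R * (\<Sum>j<n. (x j)\<^sup>2 * R)"
    using cols R by (intro mult_left_mono sum_mono) auto
  also have "\<dots> = R * R * (\<Sum>j<n. (x j)\<^sup>2)"
    by (simp add: sum_distrib_right sum_distrib_left mult_ac)
  also have "\<dots> \<le> R\<^sup>2" using x R unfolding unit_ball_def
    by (simp add: mult_left_le power2_eq_square)
  finally show "matvec_norm n A x \<le> R"
    unfolding matvec_norm_def using R real_le_lsqrt by blast
qed

text \<open>Each row of a Toeplitz matrix sees every coefficient a_k, k < n, at most twice.\<close>

lemma toeplitz_row_sum_le:
  fixes f :: "nat \<Rightarrow> real"
  assumes f: "\<And>k. 0 \<le> f k" and i: "i < n"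
  shows "(\<Sum>j<n. f (nat \<bar>int i - int j\<bar>)) \<le> 2 * (\<Sum>k<n. f k)"
proof -
  have "(\<Sum>j<n. f (nat \<bar>int i - int j\<bar>))
      \<le> (\<Sum>j<n. (if j \<le> i then f (i - j) else 0) + (if i < j then f (j - i) else 0))"
    by (intro sum_mono) (auto simp: f nat_minus_as_int)
  also have "\<dots> = (\<Sum>j\<in>{j. j<n \<and> j \<le> i}. f (i - j)) + (\<Sum>j\<in>{j. j<n \<and> i < j}. f (j - i))"
    by (simp add: sum.distrib sum.If_cases Int_def conj_commute)
  also have "(\<Sum>j\<in>{j. j<n \<and> j \<le> i}. f (i - j)) = (\<Sum>k\<in>(\<lambda>j. i - j) ` {j. j<n \<and> j \<le> i}. f k)"
    by (subst sum.reindex) (auto simp: inj_on_def)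
  also have "\<dots> \<le> (\<Sum>k<n. f k)"
    using i by (intro sum_mono2) (auto simp: f)
  also have "(\<Sum>j\<in>{j. j<n \<and> i < j}. f (j - i)) = (\<Sum>k\<in>(\<lambda>j. j - i) ` {j. j<n \<and> i < j}. f k)"
    by (subst sum.reindex) (auto simp: inj_on_def)
  also have "\<dots> \<le> (\<Sum>k<n. f k)"
    by (intro sum_mono2) (auto simp: f)
  finally show ?thesis by simp
qed

lemma mat_opnorm_toeplitz_le_abs_sum: "mat_opnorm n (toeplitz a) \<le> 2 * (\<Sum>k<n. \<bar>a k\<bar>)"
proof (rule mat_opnorm_Schur_test)
  show "0 \<le> 2 * (\<Sum>k<n. \<bar>a k\<bar>)" by (simp add: sum_nonneg)
  show "(\<Sum>j<n. \<bar>toeplitz a i j\<bar>) \<le> 2 * (\<Sum>k<n. \<bar>a k\<bar>)" if "i < n" for i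
    unfolding toeplitz_def using that by (intro toeplitz_row_sum_le) auto
  show "(\<Sum>i<n. \<bar>toeplitz a i j\<bar>) \<le> 2 * (\<Sum>k<n. \<bar>a k\<bar>)" if "j < n" for j
    using toeplitz_row_sum_le[of "\<lambda>k. \<bar>a k\<bar>" j n] that
    unfolding toeplitz_def by (simp add: abs_minus_commute)
qed

lemma toeplitz_perturbation_bound:
  assumes x: "\<And>k. x k = \<mu> + w k + z k"
  shows "\<bar>mat_opnorm n (toeplitz x) - \<bar>m\<bar> * real n\<bar>
     \<le> mat_opnorm n (toeplitz w) + 2 * (\<Sum>k<n. \<bar>z k\<bar>) + \<bar>\<mu> - m\<bar> * real n"
proof -
  have T: "toeplitz x = (\<lambda>i j. (\<lambda>i j. \<mu>) i j + (\<lambda>i j. toeplitz w i j + toeplitz z i j) i j)"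
    by (auto simp: toeplitz_def x fun_eq_iff)
  have C: "(\<lambda>i j. \<mu>) = (\<lambda>i j. toeplitz x i j +
      (\<lambda>i j. (\<lambda>i j. - toeplitz w i j) i j + (\<lambda>i j. - toeplitz z i j) i j) i j)"
    by (auto simp: toeplitz_def x fun_eq_iff)
  have upper: "mat_opnorm n (toeplitz x) \<le> \<bar>\<mu>\<bar> * real n + (mat_opnorm n (toeplitz w) + mat_opnorm n (toeplitz z))"
    by (subst T, rule order_trans[OF mat_opnorm_add], simp add: mat_opnorm_const mat_opnorm_add)
  have "mat_opnorm n (\<lambda>i j. (\<lambda>i j. - toeplitz w i j) i j + (\<lambda>i j. - toeplitz z i j) i j)
      \<le> mat_opnorm n (toeplitz w) + mat_opnorm n (toeplitz z)"
    using mat_opnorm_add[of n "\<lambda>i j. - toeplitz w i j" "\<lambda>i j. - toeplitz z i j"]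
    by (simp only: mat_opnorm_uminus)
  moreover have "mat_opnorm n (\<lambda>i j. \<mu>) \<le> mat_opnorm n (toeplitz x)
      + mat_opnorm n (\<lambda>i j. (\<lambda>i j. - toeplitz w i j) i j + (\<lambda>i j. - toeplitz z i j) i j)"
    by (subst C, rule mat_opnorm_add)
  ultimately have lower: "\<bar>\<mu>\<bar> * real n \<le> mat_opnorm n (toeplitz x) + (mat_opnorm n (toeplitz w) + mat_opnorm n (toeplitz z))"
    by (simp add: mat_opnorm_const)
  have "\<bar>\<bar>\<mu>\<bar> * real n - \<bar>m\<bar> * real n\<bar> \<le> \<bar>\<mu> - m\<bar> * real n"
    by (simp add: left_diff_distrib[symmetric] abs_mult abs_triangle_ineq3 mult_right_mono)
  then show ?thesis using upper lower mat_opnorm_toeplitz_le_abs_sum[of n z] by linarith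
qed

section \<open>Deterministic limit arguments\<close>

text \<open>Interpolation between squares: a nondecreasing F with F((j+1)^2) \<le> c (j+1)^2
  eventually satisfies F n \<le> (c + \<delta>) n eventually, since consecutive squares around n
  differ by O(sqrt n).\<close>

lemma eventually_le_of_squares:
  fixes F :: "nat \<Rightarrow> real"
  assumes mono: "\<And>n n'. n \<le> n' \<Longrightarrow> F n \<le> F n'" and c: "0 \<le> c"
    and squares: "eventually (\<lambda>j. F ((j+1)^2) \<le> c * real ((j+1)^2)) sequentially"
    and \<delta>: "0 < \<delta>"
  shows "eventually (\<lambda>n. F n \<le> (c + \<delta>) * real n) sequentially"
proof -
  obtain J where J: "\<And>j. j \<ge> J \<Longrightarrow> F ((j+1)^2) \<le> c * real ((j+1)^2)"
    using squares unfolding eventually_sequentially by auto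
  define N where "N = max (J^2 + 1) (nat \<lceil>(3*c/\<delta>)^2\<rceil> + 1)"
  show ?thesis unfolding eventually_sequentially
  proof (intro exI allI impI)
    fix n assume n: "N \<le> n"
    define j where "j = floor_sqrt (n - 1)"
    have n1: "1 \<le> n" using n N_def by auto
    have nj: "n \<le> (j+1)^2" using Suc_floor_sqrt_power2_gt[of "n - 1"] n1 unfolding j_def by simp
    have jn: "real j ^ 2 \<le> real n"
      using floor_sqrt_power2_le[of "n - 1"] unfolding j_def of_nat_power[symmetric] of_nat_le_iff by linarith
    have "J \<le> j"
    proof (rule ccontr)
      assume "\<not> J \<le> j"
      then have "(j+1)^2 \<le> J^2" by (intro power_mono) simp_all
      then show False using nj n unfolding N_def by linarith
    qed
    have "F n \<le> F ((j+1)^2)" using mono nj by simp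
    also have "\<dots> \<le> c * real ((j+1)^2)" using J \<open>J \<le> j\<close> by simp
    also have "\<dots> \<le> (c + \<delta>) * real n"
    proof -
      have sj: "real j \<le> sqrt (real n)" using jn real_le_rsqrt by blast
      have "real ((j+1)^2) = real j^2 + 2 * real j + 1" by (simp add: power2_eq_square algebra_simps)
      also have "\<dots> \<le> real n + 3 * sqrt (real n)"
        using jn sj real_sqrt_ge_one[of "real n"] n1 by linarith
      finally have gap: "real ((j+1)^2) \<le> real n + 3 * sqrt (real n)" .
      have "(3*c/\<delta>)^2 \<le> real n"
        using n real_nat_ceiling_ge[of "(3*c/\<delta>)^2"] unfolding N_def by linarith
      then have "3*c/\<delta> \<le> sqrt (real n)" using real_le_rsqrt by blast
      then have "3*c \<le> \<delta> * sqrt (real n)" using \<delta> by (simp add: divide_le_eq mult.commute)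
      then have "3*c * sqrt (real n) \<le> \<delta> * sqrt (real n) * sqrt (real n)"
        by (rule mult_right_mono) simp
      then have small: "c * (3 * sqrt (real n)) \<le> \<delta> * real n" by (simp add: mult_ac)
      have "c * real ((j+1)^2) \<le> c * (real n + 3 * sqrt (real n))"
        using gap c by (rule mult_left_mono)
      then show ?thesis using small by (simp add: algebra_simps)
    qed
    finally show "F n \<le> (c + \<delta>) * real n" .
  qed
qed

lemma LIMSEQ_div_of_eventually_close:
  fixes a :: "nat \<Rightarrow> real"
  assumes close: "\<And>k::nat. eventually (\<lambda>n. \<bar>a n - c * real n\<bar> \<le> real n / real (Suc k)) sequentially"
  shows "(\<lambda>n. a n / real n) \<longlonglongrightarrow> c"
proof (rule LIMSEQ_I)
  fix r :: real assume r: "0 < r"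
  obtain k :: nat where "1 / r < real k" using reals_Archimedean2 by blast
  then have "1 / r < real (Suc k)" by simp
  then have k: "1 / real (Suc k) < r" using r by (simp add: pos_divide_less_eq mult.commute)
  obtain N where N: "\<And>n. n \<ge> N \<Longrightarrow> \<bar>a n - c * real n\<bar> \<le> real n / real (Suc k)"
    using close[of k] unfolding eventually_sequentially by blast
  have "norm (a n / real n - c) < r" if n: "max N 1 \<le> n" for n
  proof -
    have "norm (a n / real n - c) = \<bar>a n - c * real n\<bar> / real n"
      using n by (simp add: field_simps)
    also have "\<dots> \<le> (real n / real (Suc k)) / real n"
      using N n by (intro divide_right_mono) auto
    also have "\<dots> < r" using n k by simp
    finally show ?thesis .
  qed
  then show "\<exists>N. \<forall>n\<ge>N. norm (a n / real n - c) < r" by blast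
qed

lemma div_power_Suc_cancel:
  fixes A d N :: real
  assumes "0 < N" "0 < d" "m = Suc k"
  shows "A * N^k / (d * N^m) = A / d / N"
  using assms by (simp add: mult_ac)

section \<open>Fourth moments of Toeplitz Gram matrices\<close>

definition lag :: "nat \<Rightarrow> nat \<Rightarrow> nat" where
  "lag i j = nat \<bar>int i - int j\<bar>"

lemma gram_frob_toeplitz: "gram_frob n (toeplitz a) = (\<Sum>j<n. \<Sum>l<n. \<Sum>i<n. \<Sum>i'<n.
    a (lag i j) * a (lag i l) * a (lag i' j) * a (lag i' l))"
  unfolding gram_frob_def toeplitz_def lag_def
  by (simp add: power2_eq_square sum_product mult_ac)

text \<open>Counting: for fixed j a given lag v is attained by at most two rows i', and
  lag i' j = lag i' l forces i' to be the midpoint of j and l unless j = l.\<close>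

lemma card_lag_eq_le_2: "(\<Sum>i'<n. of_bool (lag i' j = v) :: real) \<le> 2"
proof -
  have "{..<n} \<inter> {i'. lag i' j = v} \<subseteq> {j + v, j - v}" by (auto simp: lag_def)
  then have "card ({..<n} \<inter> {i'. lag i' j = v}) \<le> card {j + v, j - v}"
    by (intro card_mono) auto
  also have "\<dots> \<le> 2" by (simp add: card_insert_le_m1)
  finally show ?thesis by simp
qed

lemma card_equal_lags_le: "(\<Sum>i'<n. of_bool (lag i' j = lag i' l) :: real) \<le> of_bool (j = l) * real n + 1"
proof (cases "j = l")
  case True
  have "(\<Sum>i'<n. of_bool (lag i' j = lag i' l) :: real) \<le> (\<Sum>i'<n. 1)"
    by (intro sum_mono) auto
  then show ?thesis using True by simp
next
  case False
  have "{..<n} \<inter> {i'. lag i' j = lag i' l} \<subseteq> {(j + l) div 2}" using False by (auto simp: lag_def)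
  then have "card ({..<n} \<inter> {i'. lag i' j = lag i' l}) \<le> card {(j + l) div 2}"
    by (intro card_mono) auto
  then show ?thesis using False by simp
qed

text \<open>Number of index quadruples in which the lag at (i', j) coincides with one of
  the other three lags; only these can contribute to the expected Gram norm.\<close>

lemma card_matched_quadruples: "(\<Sum>j<n. \<Sum>l<n. \<Sum>i<n. \<Sum>i'<n. (of_bool (lag i' j = lag i j)
     + of_bool (lag i' j = lag i l) + of_bool (lag i' j = lag i' l) :: real)) \<le> 6 * real n ^ 3"
proof -
  have "(\<Sum>j<n. \<Sum>l<n. \<Sum>i<n. \<Sum>i'<n. (of_bool (lag i' j = lag i j) + of_bool (lag i' j = lag i l)
     + of_bool (lag i' j = lag i' l) :: real)) \<le> (\<Sum>j<n. \<Sum>l<n. \<Sum>i<n. (5 + of_bool (j = l) * real n))"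
  proof (intro sum_mono)
    fix j l i
    show "(\<Sum>i'<n. (of_bool (lag i' j = lag i j) + of_bool (lag i' j = lag i l)
        + of_bool (lag i' j = lag i' l) :: real)) \<le> 5 + of_bool (j = l) * real n"
      using card_lag_eq_le_2[where n=n and j=j and v="lag i j"]
        card_lag_eq_le_2[where n=n and j=j and v="lag i l"] card_equal_lags_le[where n=n and j=j and l=l]
      unfolding sum.distrib by linarith
  qed
  also have "\<dots> = (\<Sum>j<n. \<Sum>l<n. real n * 5 + of_bool (j = l) * (real n * real n))"
    by (simp add: algebra_simps)
  also have "\<dots> = (\<Sum>j<n. real n * real n * 5 + real n * real n)"
    by (intro sum.cong refl) (simp add: sum.distrib)
  also have "\<dots> = 6 * real n ^ 3" by (simp add: power3_eq_cube algebra_simps)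
  finally show ?thesis .
qed

context prob_space
begin

section \<open>Moment bounds for independent variables\<close>

lemma Markov_Borel_Cantelli:
  fixes H :: "nat \<Rightarrow> 'a \<Rightarrow> real"
  assumes int: "\<And>j. integrable M (H j)" and nn: "\<And>j \<omega>. \<omega> \<in> space M \<Longrightarrow> 0 \<le> H j \<omega>"
    and t: "\<And>j. 0 < t j" and ratio: "\<And>j. expectation (H j) / t j \<le> C / (real j + 1)^2"
  shows "AE \<omega> in M. eventually (\<lambda>j. H j \<omega> < t j) sequentially"
proof -
  define A where "A j = {\<omega>\<in>space M. t j \<le> H j \<omega>}" for j
  have [measurable]: "H j \<in> borel_measurable M" for j using int by auto
  have A: "A j \<in> sets M" for j unfolding A_def by measurable
  have prob_A: "measure M (A j) \<le> \<bar>C\<bar> * inverse (real (Suc j) ^ 2)" for j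
  proof -
    have "measure M (A j) \<le> expectation (H j) / t j"
      unfolding A_def
      by (rule integral_Markov_inequality_measure[where A="space M"]) (use int nn t in auto)
    also have "\<dots> \<le> C / (real j + 1)^2" by (rule ratio)
    also have "\<dots> \<le> \<bar>C\<bar> * inverse (real (Suc j) ^ 2)"
      by (simp add: divide_inverse add.commute mult_right_mono)
    finally show ?thesis .
  qed
  have "summable (\<lambda>j. inverse (real j ^ 2))"
    using inverse_power_summable[of 2, where 'a=real] by simp
  then have "summable (\<lambda>j. \<bar>C\<bar> * inverse (real (Suc j) ^ 2))"
    by (intro summable_mult) (subst summable_Suc_iff)
  then have "summable (\<lambda>j. measure M (A j))"
    by (rule summable_comparison_test[rotated]) (use prob_A in auto)
  then have "AE \<omega> in M. eventually (\<lambda>j. \<omega> \<in> space M - A j) sequentially"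
    by (intro borel_cantelli_AE1[OF A]) (simp_all add: less_top[symmetric])
  then show ?thesis
    by (rule AE_mp) (auto intro!: AE_I2 elim: eventually_mono simp: A_def)
qed

lemma indep_centered_product_zero:
  fixes V :: "nat \<Rightarrow> 'a \<Rightarrow> real"
  assumes ind: "indep_vars (\<lambda>_. borel) V UNIV" and c: "c \<notin> B"
    and g: "g \<in> borel_measurable (PiM B (\<lambda>_. borel))"
    and iV: "integrable M (V c)" and centered: "expectation (V c) = 0"
    and ig: "integrable M (\<lambda>\<omega>. g (restrict (\<lambda>i. V i \<omega>) B))"
  shows "expectation (\<lambda>\<omega>. V c \<omega> * g (restrict (\<lambda>i. V i \<omega>) B)) = 0"
proof -
  have "indep_var (PiM {c} (\<lambda>_. borel)) (\<lambda>\<omega>. restrict (\<lambda>i. V i \<omega>) {c})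
       (PiM B (\<lambda>_. borel)) (\<lambda>\<omega>. restrict (\<lambda>i. V i \<omega>) B)"
    using c by (intro indep_var_restrict[OF ind]) auto
  then have "indep_var borel ((\<lambda>f. f c) \<circ> (\<lambda>\<omega>. restrict (\<lambda>i. V i \<omega>) {c}))
      borel (g \<circ> (\<lambda>\<omega>. restrict (\<lambda>i. V i \<omega>) B))"
    by (rule indep_var_compose[OF _ _ g]) (rule measurable_component_singleton, simp)
  then have "indep_var borel (V c) borel (\<lambda>\<omega>. g (restrict (\<lambda>i. V i \<omega>) B))"
    by (simp add: comp_def)
  then show ?thesis
    using indep_var_lebesgue_integral[OF _ iV ig] centered by simp
qed

lemma product4_bounded:
  fixes W :: "nat \<Rightarrow> 'a \<Rightarrow> real"
  assumes ind: "indep_vars (\<lambda>_. borel) W UNIV" and bnd: "\<And>k \<omega>. \<omega> \<in> space M \<Longrightarrow> \<bar>W k \<omega>\<bar> \<le> \<beta>"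
  shows "integrable M (\<lambda>\<omega>. W a \<omega> * W b \<omega> * W c \<omega> * W d \<omega>)"
    and "expectation (\<lambda>\<omega>. W a \<omega> * W b \<omega> * W c \<omega> * W d \<omega>) \<le> \<beta>^4"
proof -
  have [measurable]: "W k \<in> borel_measurable M" for k using ind by (auto simp: indep_vars_def)
  have \<beta>: "0 \<le> \<beta>" using bnd not_empty by (meson abs_ge_zero equals0I order_trans)
  have b: "\<bar>W a \<omega> * W b \<omega> * W c \<omega> * W d \<omega>\<bar> \<le> \<beta>^4" if "\<omega> \<in> space M" for \<omega>
    unfolding abs_mult power4_eq_xxxx using bnd[OF that] \<beta>
    by (intro mult_mono) (auto intro: order_trans[OF abs_ge_zero bnd[OF that]])
  show i: "integrable M (\<lambda>\<omega>. W a \<omega> * W b \<omega> * W c \<omega> * W d \<omega>)"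
    by (rule integrable_const_bound[where B="\<beta>^4"]) (auto simp: b)
  show "expectation (\<lambda>\<omega>. W a \<omega> * W b \<omega> * W c \<omega> * W d \<omega>) \<le> \<beta>^4"
    by (rule integral_le_const[OF i]) (auto intro!: AE_I2 dest: b)
qed

lemma product4_unmatched_zero:
  fixes W :: "nat \<Rightarrow> 'a \<Rightarrow> real"
  assumes ind: "indep_vars (\<lambda>_. borel) W UNIV" and bnd: "\<And>k \<omega>. \<omega> \<in> space M \<Longrightarrow> \<bar>W k \<omega>\<bar> \<le> \<beta>"
    and centered: "\<And>k. expectation (W k) = 0" and c: "c \<notin> {a, b, d}"
  shows "expectation (\<lambda>\<omega>. W a \<omega> * W b \<omega> * W c \<omega> * W d \<omega>) = 0"
proof -
  have [measurable]: "W k \<in> borel_measurable M" for k using ind by (auto simp: indep_vars_def)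
  define g where "g f = f a * f b * (f d :: real)" for f :: "nat \<Rightarrow> real"
  have "g \<in> borel_measurable (PiM {a, b, d} (\<lambda>_. borel))" unfolding g_def by measurable
  moreover have "integrable M (\<lambda>\<omega>. g (restrict (\<lambda>i. W i \<omega>) {a, b, d}))"
    unfolding g_def
    by (rule integrable_const_bound[where B="\<beta> * \<beta> * \<beta>"])
       (auto intro!: mult_mono simp: abs_mult bnd intro: order_trans[OF abs_ge_zero bnd])
  moreover have "integrable M (W c)"
    by (rule integrable_const_bound[where B="\<beta>"]) (auto simp: bnd)
  ultimately have "expectation (\<lambda>\<omega>. W c \<omega> * g (restrict (\<lambda>i. W i \<omega>) {a, b, d})) = 0"
    using indep_centered_product_zero[OF ind c] centered by blast
  then show ?thesis by (simp add: g_def mult_ac)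
qed

text \<open>For bounded centred independent coefficients, E ||T_n^T T_n||_F^2 = O(n^3):
  only matched quadruples of lags contribute.\<close>

lemma expectation_gram_frob_toeplitz:
  fixes W :: "nat \<Rightarrow> 'a \<Rightarrow> real"
  assumes ind: "indep_vars (\<lambda>_. borel) W UNIV" and bnd: "\<And>k \<omega>. \<omega> \<in> space M \<Longrightarrow> \<bar>W k \<omega>\<bar> \<le> \<beta>"
    and centered: "\<And>k. expectation (W k) = 0"
  shows "integrable M (\<lambda>\<omega>. gram_frob n (toeplitz (\<lambda>k. W k \<omega>)))"
    and "expectation (\<lambda>\<omega>. gram_frob n (toeplitz (\<lambda>k. W k \<omega>))) \<le> 6 * \<beta>^4 * real n ^ 3"
proof -
  note bounded = product4_bounded[OF ind bnd]
  have \<beta>: "0 \<le> \<beta>" using bnd not_empty by (meson abs_ge_zero equals0I order_trans)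
  show "integrable M (\<lambda>\<omega>. gram_frob n (toeplitz (\<lambda>k. W k \<omega>)))"
    unfolding gram_frob_toeplitz by (intro Bochner_Integration.integrable_sum bounded(1))
  let ?matched = "\<lambda>i i' j l. of_bool (lag i' j = lag i j) + of_bool (lag i' j = lag i l)
     + of_bool (lag i' j = lag i' l) :: real"
  have term_bound: "expectation (\<lambda>\<omega>. W (lag i j) \<omega> * W (lag i l) \<omega> * W (lag i' j) \<omega> * W (lag i' l) \<omega>)
      \<le> \<beta>^4 * ?matched i i' j l" for i i' j l
  proof (cases "lag i' j \<in> {lag i j, lag i l, lag i' l}")
    case True
    then have "\<beta>^4 * 1 \<le> \<beta>^4 * ?matched i i' j l"
      using \<beta> by (intro mult_left_mono) auto
    then show ?thesis using bounded(2)[of "lag i j" "lag i l" "lag i' j" "lag i' l"] by simp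
  next
    case False
    then show ?thesis using product4_unmatched_zero[OF ind bnd centered False] \<beta> by simp
  qed
  have "expectation (\<lambda>\<omega>. gram_frob n (toeplitz (\<lambda>k. W k \<omega>))) = (\<Sum>j<n. \<Sum>l<n. \<Sum>i<n. \<Sum>i'<n.
      expectation (\<lambda>\<omega>. W (lag i j) \<omega> * W (lag i l) \<omega> * W (lag i' j) \<omega> * W (lag i' l) \<omega>))"
    unfolding gram_frob_toeplitz by (simp add: bounded)
  also have "\<dots> \<le> \<beta>^4 * (\<Sum>j<n. \<Sum>l<n. \<Sum>i<n. \<Sum>i'<n. ?matched i i' j l)"
    unfolding sum_distrib_left by (intro sum_mono term_bound)
  also have "\<dots> \<le> \<beta>^4 * (6 * real n ^ 3)"
    using \<beta> by (intro mult_left_mono card_matched_quadruples) auto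
  finally show "expectation (\<lambda>\<omega>. gram_frob n (toeplitz (\<lambda>k. W k \<omega>))) \<le> 6 * \<beta>^4 * real n ^ 3"
    by simp
qed

lemma expectation_sum_square_le:
  fixes V :: "nat \<Rightarrow> 'a \<Rightarrow> real"
  assumes ind: "indep_vars (\<lambda>_. borel) V UNIV" and sq: "\<And>k. integrable M (\<lambda>\<omega>. (V k \<omega>)^2)"
    and centered: "\<And>k. expectation (V k) = 0" and var: "\<And>k. expectation (\<lambda>\<omega>. (V k \<omega>)^2) \<le> s"
  shows "integrable M (\<lambda>\<omega>. (\<Sum>k<N. V k \<omega>)^2)"
    and "expectation (\<lambda>\<omega>. (\<Sum>k<N. V k \<omega>)^2) \<le> real N * s"
proof -
  have [measurable]: "V k \<in> borel_measurable M" for k using ind by (auto simp: indep_vars_def)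
  have iV: "integrable M (V k)" for k
    by (rule square_integrable_imp_integrable[OF _ sq]) measurable
  have iprod: "integrable M (\<lambda>\<omega>. V k \<omega> * V k' \<omega>)" for k k'
  proof (rule Bochner_Integration.integrable_bound[where f="\<lambda>\<omega>. (V k \<omega>)^2 + (V k' \<omega>)^2"])
    show "integrable M (\<lambda>\<omega>. (V k \<omega>)^2 + (V k' \<omega>)^2)" using sq by auto
    have "\<bar>x * y\<bar> \<le> x^2 + y^2" for x y :: real
      using sum_squares_bound[of "\<bar>x\<bar>" "\<bar>y\<bar>"] mult_nonneg_nonneg[of "\<bar>x\<bar>" "\<bar>y\<bar>"]
      unfolding abs_mult power2_abs by linarith
    then show "AE \<omega> in M. norm (V k \<omega> * V k' \<omega>) \<le> norm ((V k \<omega>)^2 + (V k' \<omega>)^2)"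
      by (intro AE_I2) simp
  qed measurable
  have expand: "(\<lambda>\<omega>. (\<Sum>k<N. V k \<omega>)^2) = (\<lambda>\<omega>. \<Sum>k<N. \<Sum>k'<N. V k \<omega> * V k' \<omega>)"
    by (simp add: power2_eq_square sum_product)
  show "integrable M (\<lambda>\<omega>. (\<Sum>k<N. V k \<omega>)^2)"
    unfolding expand by (intro Bochner_Integration.integrable_sum iprod)
  have orth: "expectation (\<lambda>\<omega>. V k \<omega> * V k' \<omega>) \<le> (if k' = k then s else 0)" for k k'
  proof (cases "k' = k")
    case True then show ?thesis using var[of k] by (simp add: power2_eq_square)
  next
    case False
    have "expectation (\<lambda>\<omega>. V k \<omega> * (\<lambda>f. f k') (restrict (\<lambda>i. V i \<omega>) {k'})) = 0"
      by (rule indep_centered_product_zero[OF ind _ _ iV centered]) (use False iV in auto)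
    then show ?thesis using False by simp
  qed
  have "expectation (\<lambda>\<omega>. (\<Sum>k<N. V k \<omega>)^2) = (\<Sum>k<N. \<Sum>k'<N. expectation (\<lambda>\<omega>. V k \<omega> * V k' \<omega>))"
    unfolding expand by (simp add: iprod)
  also have "\<dots> \<le> (\<Sum>k<N. \<Sum>k'<N. (if k' = k then s else 0))"
    by (intro sum_mono orth)
  also have "\<dots> = real N * s" by simp
  finally show "expectation (\<lambda>\<omega>. (\<Sum>k<N. V k \<omega>)^2) \<le> real N * s" .
qed

text \<open>Toeplitz matrices with bounded centred independent coefficients have operator
  norm o(n) almost surely: fourth moments along the squares, then interpolation.\<close>

lemma toeplitz_bounded_centered_small:
  fixes W :: "nat \<Rightarrow> 'a \<Rightarrow> real"
  assumes ind: "indep_vars (\<lambda>_. borel) W UNIV" and bnd: "\<And>k \<omega>. \<omega> \<in> space M \<Longrightarrow> \<bar>W k \<omega>\<bar> \<le> \<beta>"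
    and centered: "\<And>k. expectation (W k) = 0" and \<delta>: "0 < \<delta>"
  shows "AE \<omega> in M. eventually (\<lambda>n. mat_opnorm n (toeplitz (\<lambda>k. W k \<omega>)) \<le> \<delta> * real n) sequentially"
proof -
  define \<eta> where "\<eta> = \<delta> / 2"
  have \<eta>: "0 < \<eta>" using \<delta> by (simp add: \<eta>_def)
  let ?N = "\<lambda>j::nat. real ((j+1)^2)"
  have "AE \<omega> in M. eventually (\<lambda>j. gram_frob ((j+1)^2) (toeplitz (\<lambda>k. W k \<omega>)) < \<eta>^4 * ?N j ^ 4) sequentially"
  proof (rule Markov_Borel_Cantelli[where C="6 * \<beta>^4 / \<eta>^4"])
    fix j
    note gram = expectation_gram_frob_toeplitz[OF ind bnd centered, of "(j+1)^2"]
    show "integrable M (\<lambda>\<omega>. gram_frob ((j+1)^2) (toeplitz (\<lambda>k. W k \<omega>)))" by (rule gram(1))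
    show "0 \<le> gram_frob ((j+1)^2) (toeplitz (\<lambda>k. W k \<omega>))" for \<omega> by (rule gram_frob_nonneg)
    show "0 < \<eta>^4 * ?N j ^ 4" using \<eta> by simp
    have "expectation (\<lambda>\<omega>. gram_frob ((j+1)^2) (toeplitz (\<lambda>k. W k \<omega>))) / (\<eta>^4 * ?N j ^ 4)
        \<le> 6 * \<beta>^4 * ?N j ^ 3 / (\<eta>^4 * ?N j ^ 4)"
      using gram(2) \<eta> by (intro divide_right_mono) auto
    also have "\<dots> = 6 * \<beta>^4 / \<eta>^4 / ?N j" using \<eta> by (intro div_power_Suc_cancel) auto
    finally show "expectation (\<lambda>\<omega>. gram_frob ((j+1)^2) (toeplitz (\<lambda>k. W k \<omega>))) / (\<eta>^4 * ?N j ^ 4)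
        \<le> 6 * \<beta>^4 / \<eta>^4 / (real j + 1)^2" by (simp add: add.commute)
  qed
  then show ?thesis
  proof (rule AE_mp, intro AE_I2 impI)
    fix \<omega> assume "eventually (\<lambda>j. gram_frob ((j+1)^2) (toeplitz (\<lambda>k. W k \<omega>)) < \<eta>^4 * ?N j ^ 4) sequentially"
    then have "eventually (\<lambda>j. mat_opnorm ((j+1)^2) (toeplitz (\<lambda>k. W k \<omega>)) \<le> \<eta> * real ((j+1)^2)) sequentially"
      by (rule eventually_mono) (use \<eta> in \<open>auto intro!: mat_opnorm_le_gram_frob simp: power_mult_distrib\<close>)
    then have "eventually (\<lambda>n. mat_opnorm n (toeplitz (\<lambda>k. W k \<omega>)) \<le> (\<eta> + \<eta>) * real n) sequentially"
      by (rule eventually_le_of_squares[rotated 2]) (use \<eta> mat_opnorm_mono in auto)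
    then show "eventually (\<lambda>n. mat_opnorm n (toeplitz (\<lambda>k. W k \<omega>)) \<le> \<delta> * real n) sequentially"
      by (simp add: \<eta>_def)
  qed
qed

text \<open>Upper half of the strong law of large numbers for nonnegative independent
  variables with common mean e and bounded variances: second moments along the
  squares, then interpolation (partial sums are monotone).\<close>

lemma nonneg_partial_sums_upper:
  fixes Z :: "nat \<Rightarrow> 'a \<Rightarrow> real"
  assumes ind: "indep_vars (\<lambda>_. borel) Z UNIV" and nn: "\<And>k \<omega>. \<omega> \<in> space M \<Longrightarrow> 0 \<le> Z k \<omega>"
    and sq: "\<And>k. integrable M (\<lambda>\<omega>. (Z k \<omega>)^2)" and mean: "\<And>k. expectation (Z k) = e"
    and var: "\<And>k. variance (Z k) \<le> s" and \<delta>: "0 < \<delta>"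
  shows "AE \<omega> in M. eventually (\<lambda>n. (\<Sum>k<n. Z k \<omega>) \<le> (e + \<delta>) * real n) sequentially"
proof -
  have [measurable]: "Z k \<in> borel_measurable M" for k using ind by (auto simp: indep_vars_def)
  have iZ: "integrable M (Z k)" for k by (rule square_integrable_imp_integrable[OF _ sq]) measurable
  have e: "0 \<le> e" using mean[of 0] nn by (metis AE_I2 integral_nonneg_AE)
  define V where "V k \<omega> = Z k \<omega> - e" for k \<omega>
  have indV: "indep_vars (\<lambda>_. borel) V UNIV"
    unfolding V_def by (rule indep_vars_compose2[OF ind]) measurable
  have sqV: "integrable M (\<lambda>\<omega>. (V k \<omega>)^2)" for k
    unfolding V_def power2_diff using sq iZ by auto
  have centered: "expectation (V k) = 0" for k
    unfolding V_def using iZ mean by (simp add: prob_space)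
  have varV: "expectation (\<lambda>\<omega>. (V k \<omega>)^2) \<le> s" for k
    using var[of k] by (simp add: V_def mean)
  define \<eta> where "\<eta> = \<delta> / 2"
  have \<eta>: "0 < \<eta>" using \<delta> by (simp add: \<eta>_def)
  let ?N = "\<lambda>j::nat. real ((j+1)^2)"
  have "AE \<omega> in M. eventually (\<lambda>j. (\<Sum>k<(j+1)^2. V k \<omega>)^2 < \<eta>^2 * ?N j ^ 2) sequentially"
  proof (rule Markov_Borel_Cantelli[where C="s / \<eta>^2"])
    fix j
    note second = expectation_sum_square_le[OF indV sqV centered varV, of "(j+1)^2"]
    show "integrable M (\<lambda>\<omega>. (\<Sum>k<(j+1)^2. V k \<omega>)^2)" by (rule second(1))
    show "0 \<le> (\<Sum>k<(j+1)^2. V k \<omega>)^2" for \<omega> by simp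
    show "0 < \<eta>^2 * ?N j ^ 2" using \<eta> by simp
    have "expectation (\<lambda>\<omega>. (\<Sum>k<(j+1)^2. V k \<omega>)^2) / (\<eta>^2 * ?N j ^ 2) \<le> s * ?N j ^ 1 / (\<eta>^2 * ?N j ^ 2)"
      using second(2) \<eta> by (intro divide_right_mono) (auto simp: mult.commute)
    also have "\<dots> = s / \<eta>^2 / ?N j" using \<eta> by (intro div_power_Suc_cancel) auto
    finally show "expectation (\<lambda>\<omega>. (\<Sum>k<(j+1)^2. V k \<omega>)^2) / (\<eta>^2 * ?N j ^ 2)
        \<le> s / \<eta>^2 / (real j + 1)^2" by (simp add: add.commute)
  qed
  then show ?thesis
  proof (rule AE_mp, intro AE_I2 impI)
    fix \<omega> assume \<omega>: "\<omega> \<in> space M"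
      and ev: "eventually (\<lambda>j. (\<Sum>k<(j+1)^2. V k \<omega>)^2 < \<eta>^2 * ?N j ^ 2) sequentially"
    from ev have "eventually (\<lambda>j. (\<Sum>k<(j+1)^2. Z k \<omega>) \<le> (e + \<eta>) * real ((j+1)^2)) sequentially"
    proof (rule eventually_mono)
      fix j assume "(\<Sum>k<(j+1)^2. V k \<omega>)^2 < \<eta>^2 * ?N j ^ 2"
      then have "(\<Sum>k<(j+1)^2. V k \<omega>)^2 < (\<eta> * ?N j)^2" by (simp add: power_mult_distrib)
      then have "(\<Sum>k<(j+1)^2. V k \<omega>) < \<eta> * ?N j"
        by (rule power_less_imp_less_base) (use \<eta> in simp)
      moreover have "(\<Sum>k<(j+1)^2. V k \<omega>) = (\<Sum>k<(j+1)^2. Z k \<omega>) - ?N j * e"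
        unfolding V_def by (simp add: sum_subtractf)
      ultimately show "(\<Sum>k<(j+1)^2. Z k \<omega>) \<le> (e + \<eta>) * real ((j+1)^2)"
        by (simp add: algebra_simps)
    qed
    then have "eventually (\<lambda>n. (\<Sum>k<n. Z k \<omega>) \<le> (e + \<eta> + \<eta>) * real n) sequentially"
      by (rule eventually_le_of_squares[rotated 2]) (use \<eta> e \<omega> nn in \<open>auto intro!: sum_mono2\<close>)
    moreover have "e + \<eta> + \<eta> = e + \<delta>" by (simp add: \<eta>_def)
    ultimately show "eventually (\<lambda>n. (\<Sum>k<n. Z k \<omega>) \<le> (e + \<delta>) * real n) sequentially"
      by simp
  qed
qed

lemma identically_distributed_transfer:
  fixes X :: "nat \<Rightarrow> 'a \<Rightarrow> real"
  assumes distr: "\<And>i. distr M borel (X i) = distr M borel (X 0)"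
    and meas: "\<And>i. X i \<in> borel_measurable M" and f: "f \<in> borel_measurable (borel :: real measure)"
  shows "integrable M (\<lambda>\<omega>. f (X k \<omega>) :: real) = integrable M (\<lambda>\<omega>. f (X 0 \<omega>))"
    and "expectation (\<lambda>\<omega>. f (X k \<omega>)) = expectation (\<lambda>\<omega>. f (X 0 \<omega>))"
proof -
  show "integrable M (\<lambda>\<omega>. f (X k \<omega>) :: real) = integrable M (\<lambda>\<omega>. f (X 0 \<omega>))"
    using integrable_distr_eq[OF meas[of k] f] integrable_distr_eq[OF meas[of 0] f] distr[of k] by simp
  show "expectation (\<lambda>\<omega>. f (X k \<omega>)) = expectation (\<lambda>\<omega>. f (X 0 \<omega>))"
    using integral_distr[OF meas[of k] f] integral_distr[OF meas[of 0] f] distr[of k] by simp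
qed

lemma iid_bounded_toeplitz_small:
  fixes X :: "nat \<Rightarrow> 'a \<Rightarrow> real"
  assumes ind: "indep_vars (\<lambda>_. borel) X UNIV" and distr: "\<And>i. distr M borel (X i) = distr M borel (X 0)"
    and g: "g \<in> borel_measurable borel" and bnd: "\<And>x. \<bar>g x\<bar> \<le> \<beta>" and \<delta>: "0 < \<delta>"
  shows "AE \<omega> in M. eventually (\<lambda>n. mat_opnorm n (toeplitz (\<lambda>k. g (X k \<omega>) - expectation (\<lambda>\<omega>. g (X 0 \<omega>))))
           \<le> \<delta> * real n) sequentially"
proof -
  have meas[measurable]: "X i \<in> borel_measurable M" "g \<in> borel_measurable borel" for i
    using ind g by (auto simp: indep_vars_def)
  define \<mu> where "\<mu> = expectation (\<lambda>\<omega>. g (X 0 \<omega>))"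
  have ig: "integrable M (\<lambda>\<omega>. g (X k \<omega>))" for k
    by (rule integrable_const_bound[where B=\<beta>]) (auto simp: bnd)
  have "\<bar>\<mu>\<bar> \<le> \<beta>"
    unfolding \<mu>_def by (rule order_trans[OF integral_abs_bound integral_le_const]) (auto simp: bnd ig)
  then have "\<bar>g (X k \<omega>) - \<mu>\<bar> \<le> 2 * \<beta>" for k \<omega>
    using bnd[of "X k \<omega>"] by linarith
  moreover have "expectation (\<lambda>\<omega>. g (X k \<omega>) - \<mu>) = 0" for k
    using identically_distributed_transfer(2)[where X=X, OF distr meas(1), of g k] ig
    by (simp add: \<mu>_def prob_space)
  moreover have "indep_vars (\<lambda>_. borel) (\<lambda>k \<omega>. g (X k \<omega>) - \<mu>) UNIV"
    by (rule indep_vars_compose2[OF ind]) measurable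
  ultimately show ?thesis
    unfolding \<mu>_def[symmetric] by (intro toeplitz_bounded_centered_small[OF _ _ _ \<delta>])
qed

lemma iid_nonneg_partial_sums_upper:
  fixes X :: "nat \<Rightarrow> 'a \<Rightarrow> real"
  assumes ind: "indep_vars (\<lambda>_. borel) X UNIV" and distr: "\<And>i. distr M borel (X i) = distr M borel (X 0)"
    and g: "g \<in> borel_measurable borel" and nn: "\<And>x. 0 \<le> g x"
    and sq: "integrable M (\<lambda>\<omega>. (g (X 0 \<omega>))^2)" and \<delta>: "0 < \<delta>"
  shows "AE \<omega> in M. eventually (\<lambda>n. (\<Sum>k<n. g (X k \<omega>)) \<le> (expectation (\<lambda>\<omega>. g (X 0 \<omega>)) + \<delta>) * real n)
           sequentially"
proof (rule nonneg_partial_sums_upper[OF _ _ _ _ _ \<delta>])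
  have meas[measurable]: "X i \<in> borel_measurable M" "g \<in> borel_measurable borel" for i
    using ind g by (auto simp: indep_vars_def)
  note transfer = identically_distributed_transfer[where X=X, OF distr meas(1)]
  show "indep_vars (\<lambda>_. borel) (\<lambda>k \<omega>. g (X k \<omega>)) UNIV"
    by (rule indep_vars_compose2[OF ind]) measurable
  show "0 \<le> g (X k \<omega>)" for k \<omega> by (rule nn)
  show "integrable M (\<lambda>\<omega>. (g (X k \<omega>))^2)" for k
    using transfer(1)[of "\<lambda>x. (g x)^2"] sq by simp
  show mean: "expectation (\<lambda>\<omega>. g (X k \<omega>)) = expectation (\<lambda>\<omega>. g (X 0 \<omega>))" for k
    using transfer(2)[of g] by simp
  show "variance (\<lambda>\<omega>. g (X k \<omega>)) \<le> variance (\<lambda>\<omega>. g (X 0 \<omega>))" for k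
  proof -
    have "variance (\<lambda>\<omega>. g (X k \<omega>)) = expectation (\<lambda>\<omega>. (g (X k \<omega>) - expectation (\<lambda>\<omega>. g (X 0 \<omega>)))^2)"
      using mean[of k] by simp
    also have "\<dots> = variance (\<lambda>\<omega>. g (X 0 \<omega>))" by (rule transfer(2)) measurable
    finally show ?thesis by simp
  qed
qed

end

section \<open>Truncation\<close>

definition truncate :: "real \<Rightarrow> real \<Rightarrow> real" where
  "truncate K x = (if \<bar>x\<bar> \<le> K then x else 0)"

lemma truncate_measurable [measurable]: "truncate K \<in> borel_measurable borel"
  unfolding truncate_def by measurable

lemma abs_truncate_le: "0 \<le> K \<Longrightarrow> \<bar>truncate K x\<bar> \<le> K"
  by (simp add: truncate_def)

lemma truncation_error_le_abs: "\<bar>x - truncate K x\<bar> \<le> \<bar>x\<bar>"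
  by (simp add: truncate_def)

lemma truncation_error_le_square:
  assumes "0 < K"
  shows "\<bar>x - truncate K x\<bar> \<le> x^2 / K"
proof (cases "\<bar>x\<bar> \<le> K")
  case False
  then have "\<bar>x\<bar> * K \<le> \<bar>x\<bar> * \<bar>x\<bar>" by (intro mult_left_mono) auto
  then show ?thesis using False assms
    by (simp add: truncate_def le_divide_eq power2_eq_square)
qed (simp add: truncate_def)

context prob_space
begin

lemma truncation_error_expectation:
  fixes Y :: "'a \<Rightarrow> real"
  assumes [measurable]: "Y \<in> borel_measurable M" and sq: "integrable M (\<lambda>\<omega>. (Y \<omega>)^2)" and K: "0 < K"
  shows "expectation (\<lambda>\<omega>. \<bar>Y \<omega> - truncate K (Y \<omega>)\<bar>) \<le> expectation (\<lambda>\<omega>. (Y \<omega>)^2) / K"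
proof -
  have "integrable M (\<lambda>\<omega>. \<bar>Y \<omega> - truncate K (Y \<omega>)\<bar>)"
    by (rule Bochner_Integration.integrable_bound[OF square_integrable_imp_integrable[OF _ sq]])
       (auto intro: truncation_error_le_abs)
  then have "expectation (\<lambda>\<omega>. \<bar>Y \<omega> - truncate K (Y \<omega>)\<bar>) \<le> expectation (\<lambda>\<omega>. (Y \<omega>)^2 / K)"
    using sq by (intro integral_mono truncation_error_le_square K) auto
  then show ?thesis by simp
qed

text \<open>Truncate at K = 6 E X_0^2 / \<epsilon> + 1 and
  apply the perturbation bound with the two almost sure estimates above.\<close>

lemma iid_toeplitz_close:
  fixes X :: "nat \<Rightarrow> 'a \<Rightarrow> real"
  assumes ind: "indep_vars (\<lambda>_. borel) X UNIV" and distr: "\<And>i. distr M borel (X i) = distr M borel (X 0)"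
    and sq: "integrable M (\<lambda>\<omega>. (X 0 \<omega>)^2)" and \<epsilon>: "0 < \<epsilon>"
  shows "AE \<omega> in M. eventually (\<lambda>n. \<bar>mat_opnorm n (toeplitz (\<lambda>k. X k \<omega>)) - \<bar>expectation (X 0)\<bar> * real n\<bar>
           \<le> \<epsilon> * real n) sequentially"
proof -
  have [measurable]: "X i \<in> borel_measurable M" for i using ind by (auto simp: indep_vars_def)
  define s where "s = expectation (\<lambda>\<omega>. (X 0 \<omega>)^2)"
  define K where "K = 6 * s / \<epsilon> + 1"
  define \<mu> where "\<mu> = expectation (\<lambda>\<omega>. truncate K (X 0 \<omega>))"
  define e where "e = expectation (\<lambda>\<omega>. \<bar>X 0 \<omega> - truncate K (X 0 \<omega>)\<bar>)"
  have "0 \<le> s" unfolding s_def by (rule integral_nonneg_AE) simp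
  then have K: "0 < K" "6 * s \<le> \<epsilon> * K" using \<epsilon> by (simp_all add: K_def field_simps add_pos_nonneg)
  have "e \<le> s / K" unfolding e_def s_def by (rule truncation_error_expectation[OF _ sq K(1)]) simp
  also have "\<dots> \<le> \<epsilon> / 6" using K \<epsilon> by (simp add: divide_le_eq mult.commute)
  finally have e_small: "e \<le> \<epsilon> / 6" .
  have "\<bar>expectation (X 0) - \<mu>\<bar> \<le> e"
  proof -
    have "integrable M (\<lambda>\<omega>. truncate K (X 0 \<omega>))"
      by (rule integrable_const_bound[where B=K]) (use K in \<open>auto simp: abs_truncate_le\<close>)
    then have "expectation (X 0) - \<mu> = expectation (\<lambda>\<omega>. X 0 \<omega> - truncate K (X 0 \<omega>))"
      unfolding \<mu>_def using square_integrable_imp_integrable[OF _ sq] by simp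
    then show ?thesis unfolding e_def by (metis integral_abs_bound)
  qed
  then have mean_close: "\<bar>\<mu> - expectation (X 0)\<bar> \<le> \<epsilon> / 6" using e_small by linarith
  have bounded_part: "AE \<omega> in M. eventually (\<lambda>n.
      mat_opnorm n (toeplitz (\<lambda>k. truncate K (X k \<omega>) - \<mu>)) \<le> \<epsilon> / 6 * real n) sequentially"
    unfolding \<mu>_def using \<epsilon> K
    by (intro iid_bounded_toeplitz_small[OF ind distr truncate_measurable abs_truncate_le]) auto
  have "integrable M (\<lambda>\<omega>. \<bar>X 0 \<omega> - truncate K (X 0 \<omega>)\<bar>^2)"
    by (rule Bochner_Integration.integrable_bound[OF sq]) (auto simp: truncate_def)
  moreover have "0 < \<epsilon> / 6" using \<epsilon> by simp
  ultimately have tail_part: "AE \<omega> in M. eventually (\<lambda>n.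
      (\<Sum>k<n. \<bar>X k \<omega> - truncate K (X k \<omega>)\<bar>) \<le> (e + \<epsilon> / 6) * real n) sequentially"
    unfolding e_def by (intro iid_nonneg_partial_sums_upper[OF ind distr]) auto
  from bounded_part tail_part show ?thesis
  proof eventually_elim
    case (elim \<omega>)
    from elim(1) elim(2) show ?case
    proof eventually_elim
      case (elim n)
      have "\<bar>mat_opnorm n (toeplitz (\<lambda>k. X k \<omega>)) - \<bar>expectation (X 0)\<bar> * real n\<bar>
          \<le> mat_opnorm n (toeplitz (\<lambda>k. truncate K (X k \<omega>) - \<mu>))
            + 2 * (\<Sum>k<n. \<bar>X k \<omega> - truncate K (X k \<omega>)\<bar>) + \<bar>\<mu> - expectation (X 0)\<bar> * real n"
        by (rule toeplitz_perturbation_bound) simp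
      moreover have "\<bar>\<mu> - expectation (X 0)\<bar> * real n \<le> \<epsilon> / 6 * real n"
        using mean_close by (rule mult_right_mono) simp
      moreover have "e * real n \<le> \<epsilon> / 6 * real n"
        using e_small by (rule mult_right_mono) simp
      ultimately show ?case using elim by (simp add: algebra_simps)
    qed
  qed
qed

end

theorem mainTheorem7:
  fixes M :: "'a measure" and X :: "nat \<Rightarrow> 'a \<Rightarrow> real" and m :: real
  assumes "prob_space M"
    and "prob_space.indep_vars M (\<lambda>_. borel) X UNIV"
    and "\<And>i. distr M borel (X i) = distr M borel (X 0)"
    and "integrable M (\<lambda>\<omega>. (X 0 \<omega>)\<^sup>2)"
    and "prob_space.expectation M (X 0) = m"
  shows "AE \<omega> in M. (\<lambda>n. mat_opnorm n (toeplitz (\<lambda>k. X k \<omega>)) / real n) \<longlonglongrightarrow> \<bar>m\<bar>"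
proof -
  interpret prob_space M by fact
  have "AE \<omega> in M. \<forall>k::nat. eventually (\<lambda>n.
      \<bar>mat_opnorm n (toeplitz (\<lambda>k. X k \<omega>)) - \<bar>m\<bar> * real n\<bar> \<le> real n / real (Suc k)) sequentially"
    unfolding AE_all_countable
  proof
    fix k :: nat
    have "0 < 1 / real (Suc k)" by simp
    from iid_toeplitz_close[OF assms(2-4) this] show "AE \<omega> in M. eventually (\<lambda>n.
        \<bar>mat_opnorm n (toeplitz (\<lambda>k. X k \<omega>)) - \<bar>m\<bar> * real n\<bar> \<le> real n / real (Suc k)) sequentially"
      using assms(5) by simp
  qed
  then show ?thesis
    by (rule AE_mp) (auto intro!: AE_I2 LIMSEQ_div_of_eventually_close)
qed

end
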